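(* Let $M$ be a stable semigroup and let $\epsilon$ be the Zeiger encoding map on $\mathrm{Rh}(M^I)$. Let $\sigma,\tau\in\mathrm{Rh}(M^I)$ with $\sigma=(m_k<_{\mathcal L}\cdots<_{\mathcal L}m_0=I)$, $\sigma\tau=(m'_l<_{\mathcal L}\cdots<_{\mathcal L}m'_0=I)$, $\epsilon(\sigma)=(x_k,\dots,x_0)$ and $\epsilon(\sigma\tau)=(x'_l,\dots,x'_0)$, and assume $m_k\,\mathcal R\,m'_l$. Let $\sigma'=(m_{k+p}<_{\mathcal L}\cdots<_{\mathcal L}m_{k+1}<_{\mathcal L}m_k<_{\mathcal L}\cdots<_{\mathcal L}m_0)\in\mathrm{Rh}(M^I)$ with $p\ge0$, and write $\epsilon(\sigma')=(x_{k+p},\dots,x_{k+1},x_k,\dots,x_0)$. Then $$\epsilon(\sigma'\tau)=(x_{k+p},\dots,x_{k+1},x'_l,\dots,x'_1,x'_0).$$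
   Context: $M^I$ is $M$ with a new identity $I$ adjoined. $M$ is stable if $ax\,\mathcal J\,a\Rightarrow ax\,\mathcal R\,a$ and $xa\,\mathcal J\,a\Rightarrow xa\,\mathcal L\,a$. For each $\mathcal J$-class $J$ of $M^I$ fix a Rees matrix coordinatization $J^0=M^0(G,A,B,C)$ with distinguished $1\in A,B,G$, writing elements of $J$ as triples $(a,g,b)$; for $m=(a,g,b)$ fix $m^*,m^\#$ with $mm^*=(a,1,1)$, $(a,1,1)m^\#=m$, and $I^*=I^\#=I$. $\mathrm{Rh}(M^I)$ is the Rhodes expansion: chains $(m_k<_{\mathcal L}\cdots<_{\mathcal L}m_0=I)$ with product $\sigma\tau=\mathrm{lm}(m_kn\le_{\mathcal L}\cdots\le_{\mathcal L}m_1n\le_{\mathcal L}n=n_l<_{\mathcal L}\cdots<_{\mathcal L}n_0)$ for $\tau=(n_l<\cdots<n_0)$, $n=n_l$, where $\mathrm{lm}$ keeps the leftmost term of each $\mathcal L$-class block. The Zeiger encoding is $\epsilon(m_k<_{\mathcal L}\cdots<_{\mathcal L}m_0)=(x_k,\dots,x_0)$ with $x_0=I$, $x_i=m_im_{i-1}^*$. *)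

theory Defs
  imports Main "HOL-Algebra.Group"
begin

text \<open>M is the semigroup given by the type 'a (class semigroup_mult).
  M^I is modelled as 'a option, with None playing the role of the new identity I.\<close>

fun mI :: "'a::semigroup_mult option \<Rightarrow> 'a option \<Rightarrow> 'a option" where
  "mI None y = y"
| "mI (Some x) None = Some x"
| "mI (Some x) (Some y) = Some (x * y)"

abbreviation I_elem :: "'a option" where
  "I_elem \<equiv> None"

definition leR :: "'a::semigroup_mult option \<Rightarrow> 'a option \<Rightarrow> bool" where
  "leR x y \<longleftrightarrow> (\<exists>u. x = mI y u)"

definition leL :: "'a::semigroup_mult option \<Rightarrow> 'a option \<Rightarrow> bool" where
  "leL x y \<longleftrightarrow> (\<exists>u. x = mI u y)"

definition leJ :: "'a::semigroup_mult option \<Rightarrow> 'a option \<Rightarrow> bool" where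
  "leJ x y \<longleftrightarrow> (\<exists>u v. x = mI (mI u y) v)"

definition greenR :: "'a::semigroup_mult option \<Rightarrow> 'a option \<Rightarrow> bool" where
  "greenR x y \<longleftrightarrow> leR x y \<and> leR y x"

definition greenL :: "'a::semigroup_mult option \<Rightarrow> 'a option \<Rightarrow> bool" where
  "greenL x y \<longleftrightarrow> leL x y \<and> leL y x"

definition greenJ :: "'a::semigroup_mult option \<Rightarrow> 'a option \<Rightarrow> bool" where
  "greenJ x y \<longleftrightarrow> leJ x y \<and> leJ y x"

definition ltL :: "'a::semigroup_mult option \<Rightarrow> 'a option \<Rightarrow> bool" where
  "ltL x y \<longleftrightarrow> leL x y \<and> \<not> leL y x"

definition Jclass :: "'a::semigroup_mult option \<Rightarrow> 'a option set" where
  "Jclass m = {x. greenJ x m}"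

definition stable :: "'a::semigroup_mult itself \<Rightarrow> bool" where
  "stable _ \<longleftrightarrow>
     (\<forall>a x :: 'a. greenJ (Some (a * x)) (Some a) \<longrightarrow> greenR (Some (a * x)) (Some a)) \<and>
     (\<forall>a x :: 'a. greenJ (Some (x * a)) (Some a) \<longrightarrow> greenL (Some (x * a)) (Some a))"

text \<open>\<open>rees_coord J G A B C a1 b1 \<phi>\<close>: \<open>\<phi>\<close> identifies the J-class J with the
  set of nonzero elements A \<times> G \<times> B of the Rees matrix semigroup M^0(G,A,B,C)
  (sandwich matrix C : B \<times> A \<rightarrow> G \<union> {0}, with None = 0), so that J^0 \<cong> M^0(G,A,B,C);
  a1 \<in> A, b1 \<in> B are the distinguished indices "1", and the distinguished 1 \<in> G is
  the group identity.\<close>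

definition rees_coord ::
  "'a::semigroup_mult option set \<Rightarrow> 'g monoid \<Rightarrow> 'i set \<Rightarrow> 'i set \<Rightarrow> ('i \<Rightarrow> 'i \<Rightarrow> 'g option)
   \<Rightarrow> 'i \<Rightarrow> 'i \<Rightarrow> ('a option \<Rightarrow> 'i \<times> 'g \<times> 'i) \<Rightarrow> bool" where
  "rees_coord J G A B C a1 b1 \<phi> \<longleftrightarrow>
     group G \<and> a1 \<in> A \<and> b1 \<in> B \<and>
     bij_betw \<phi> J (A \<times> carrier G \<times> B) \<and>
     (\<forall>b\<in>B. \<forall>a\<in>A. \<forall>c. C b a = Some c \<longrightarrow> c \<in> carrier G) \<and>
     (\<forall>x\<in>J. \<forall>y\<in>J.
        (case \<phi> x of (a, g, b) \<Rightarrow> case \<phi> y of (a', g', b') \<Rightarrow>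
           (case C b a' of
              None \<Rightarrow> mI x y \<notin> J
            | Some c \<Rightarrow> mI x y \<in> J \<and> \<phi> (mI x y) = (a, g \<otimes>\<^bsub>G\<^esub> c \<otimes>\<^bsub>G\<^esub> g', b')))) \<and>
     (\<forall>x\<in>J. \<forall>y\<in>J. greenR x y \<longleftrightarrow> fst (\<phi> x) = fst (\<phi> y)) \<and>
     (\<forall>x\<in>J. \<forall>y\<in>J. greenL x y \<longleftrightarrow> snd (snd (\<phi> x)) = snd (snd (\<phi> y)))"

definition rees_elem ::
  "'a option set \<Rightarrow> 'g monoid \<Rightarrow> 'i \<Rightarrow> ('a option \<Rightarrow> 'i \<times> 'g \<times> 'i) \<Rightarrow> 'i \<Rightarrow> 'a option" where
  "rees_elem J G b1 \<phi> a = inv_into J \<phi> (a, \<one>\<^bsub>G\<^esub>, b1)"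

text \<open>A chain \<open>(m_k <_L \<dots> <_L m_0 = I)\<close> is represented by the list [m_k, ..., m_0].\<close>

definition rh_chain :: "'a::semigroup_mult option list \<Rightarrow> bool" where
  "rh_chain \<sigma> \<longleftrightarrow> \<sigma> \<noteq> [] \<and> last \<sigma> = None \<and>
     (\<forall>i. Suc i < length \<sigma> \<longrightarrow> ltL (\<sigma> ! i) (\<sigma> ! Suc i))"

text \<open>lm: keep the leftmost term of each block of L-equivalent consecutive terms.\<close>

fun lm :: "'a::semigroup_mult option list \<Rightarrow> 'a option list" where
  "lm [] = []"
| "lm [x] = [x]"
| "lm (x # y # xs) = (if greenL x y then lm (x # xs) else x # lm (y # xs))"

text \<open>Product in Rh(M^I): for \<sigma> = [m_k,...,m_0], \<tau> = [n_l,...,n_0], n = n_l,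
  \<sigma>\<tau> = lm [m_k n, ..., m_1 n, n_l, ..., n_0].\<close>

definition rh_mult :: "'a::semigroup_mult option list \<Rightarrow> 'a option list \<Rightarrow> 'a option list" where
  "rh_mult \<sigma> \<tau> = lm (map (\<lambda>m. mI m (hd \<tau>)) (butlast \<sigma>) @ \<tau>)"

text \<open>Zeiger encoding: [m_k,...,m_0] \<mapsto> [x_k,...,x_0], x_0 = I, x_i = m_i m_{i-1}^*.\<close>

definition zeiger ::
  "('a::semigroup_mult option \<Rightarrow> 'a option) \<Rightarrow> 'a option list \<Rightarrow> 'a option list" where
  "zeiger star \<sigma> = map (\<lambda>(a, b). mI a (star b)) (zip \<sigma> (tl \<sigma>)) @ [None]"

end

theory Submission imports Defs begin

(* Write n = hd \<tau>, h = m_k = hd \<sigma> and f x = x n.  The hypothesis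
   m_k R m'_l says h R f h (the head of \<sigma>\<tau> is h n), so h = (h n) v for some v.  By Green's
   lemma, right multiplication by n followed by v is then the identity on everything
   L-below h; in particular f preserves the strict L-chain m_{k+p} <_L ... <_L m_k, and
   f x R x for every such x.  Consequently
     (1) the product \<sigma>'\<tau> is the list [f m_{k+p}, ..., f m_{k+1}] followed by \<sigma>\<tau>, because
         the reduction lm leaves the strictly decreasing prefix untouched;
     (2) the Zeiger letters of that prefix agree with those of \<sigma>': writing m_i = u m_{i+1},
         (f m_i)(f m_{i+1})^* = u (f m_{i+1})(f m_{i+1})^* = u m_{i+1} m_{i+1}^* = m_i m_{i+1}^*,
         since x x^* depends only on the R-class of x. *)

lemma mI_assoc: "mI (mI x y) z = mI x (mI y z)"
  by (cases x; cases y; cases z) (auto simp: mult.assoc)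

lemma mI_None_right [simp]: "mI x None = x"
  by (cases x) auto

lemma leL_refl: "leL x x"
  unfolding leL_def by (rule exI[of _ None]) simp

lemma leL_trans: "leL x y \<Longrightarrow> leL y z \<Longrightarrow> leL x z"
  unfolding leL_def by (metis mI_assoc)

lemma leL_mult_right: "leL x y \<Longrightarrow> leL (mI x z) (mI y z)"
  unfolding leL_def by (metis mI_assoc)

lemma greenJ_refl: "greenJ x x"
  unfolding greenJ_def leJ_def by (metis mI.simps(1) mI_None_right)

lemma leJ_trans: "leJ x y \<Longrightarrow> leJ y z \<Longrightarrow> leJ x z"
  unfolding leJ_def by (metis mI_assoc)

lemma greenR_imp_greenJ: "greenR x y \<Longrightarrow> greenJ x y"
  unfolding greenR_def leR_def greenJ_def leJ_def by (metis mI.simps(1))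

lemma Jclass_eq: "greenJ x y \<Longrightarrow> Jclass x = Jclass y"
  unfolding Jclass_def greenJ_def by (auto intro: leJ_trans)

lemma rh_chain_leL:
  assumes "rh_chain S" and "i \<le> j" and "j < length S"
  shows "leL (S ! i) (S ! j)"
  using assms(2,3)
proof (induction j)
  case 0
  then show ?case by (simp add: leL_refl)
next
  case (Suc j)
  show ?case
  proof (cases "i = Suc j")
    case True
    then show ?thesis by (simp add: leL_refl)
  next
    case False
    then have "leL (S ! i) (S ! j)" using Suc by simp
    moreover have "leL (S ! j) (S ! Suc j)"
      using assms(1) Suc.prems(2) unfolding rh_chain_def ltL_def by blast
    ultimately show ?thesis by (rule leL_trans)
  qed
qed

text \<open>By the coordinatization, x x^* is the element (a,1,1) of the J-class of x, where a is
  the row (R-class) coordinate of x.\<close>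

lemma star_greenR_invariant:
  assumes coord: "\<And>m. rees_coord (Jclass m) (G (Jclass m)) (A (Jclass m)) (B (Jclass m))
                       (C (Jclass m)) (a1 (Jclass m)) (b1 (Jclass m)) (\<phi> (Jclass m))"
    and star: "\<And>m. mI m (star m) =
                 rees_elem (Jclass m) (G (Jclass m)) (b1 (Jclass m)) (\<phi> (Jclass m))
                   (fst (\<phi> (Jclass m) m))"
    and xy: "greenR x y"
  shows "mI x (star x) = mI y (star y)"
proof -
  have J: "Jclass x = Jclass y"
    using Jclass_eq[OF greenR_imp_greenJ[OF xy]] .
  have "x \<in> Jclass x" and "y \<in> Jclass x"
    using J greenJ_refl unfolding Jclass_def by auto
  then have "fst (\<phi> (Jclass x) x) = fst (\<phi> (Jclass x) y)"
    using coord[of x] xy unfolding rees_coord_def by blast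
  then show ?thesis using star[of x] star[of y] J by simp
qed

section \<open>Right translations that preserve an R-class (Green's lemma)\<close>

lemma right_translation_inverse:
  assumes hv: "h = mI (mI h n) v" and "leL x h"
  shows "mI (mI x n) v = x"
proof -
  obtain w where w: "x = mI w h" using \<open>leL x h\<close> unfolding leL_def by auto
  have "mI (mI x n) v = mI w (mI (mI h n) v)" unfolding w by (simp add: mI_assoc)
  then show ?thesis using hv w by simp
qed

lemma right_translation_greenR:
  assumes "h = mI (mI h n) v" and "leL x h"
  shows "greenR (mI x n) x"
  unfolding greenR_def leR_def
  using right_translation_inverse[OF assms] by metis

text \<open>Such a translation reflects \<le>L, so it maps strict L-steps to non-L-related pairs.\<close>

lemma right_translation_not_greenL:
  assumes "h = mI (mI h n) v" and "ltL x y" and "leL y h"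
  shows "\<not> greenL (mI x n) (mI y n)"
proof
  assume "greenL (mI x n) (mI y n)"
  then have "leL (mI (mI y n) v) (mI (mI x n) v)"
    unfolding greenL_def using leL_mult_right by blast
  moreover have "leL x h" using assms(2,3) unfolding ltL_def by (blast intro: leL_trans)
  ultimately have "leL y x"
    using right_translation_inverse[OF assms(1)] assms(3) by simp
  then show False using assms(2) unfolding ltL_def by simp
qed

lemma right_translation_letter:
  assumes starR: "\<And>x y. greenR x y \<Longrightarrow> mI x (star x) = mI y (star y)"
    and hv: "h = mI (mI h n) v" and "leL x y" and "leL y h"
  shows "mI (mI x n) (star (mI y n)) = mI x (star y)"
proof -
  obtain u where u: "x = mI u y" using \<open>leL x y\<close> unfolding leL_def by auto
  have "mI (mI x n) (star (mI y n)) = mI u (mI (mI y n) (star (mI y n)))"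
    unfolding u by (simp add: mI_assoc)
  also have "\<dots> = mI u (mI y (star y))"
    using starR[OF right_translation_greenR[OF hv \<open>leL y h\<close>]] by simp
  also have "\<dots> = mI x (star y)" unfolding u by (simp add: mI_assoc)
  finally show ?thesis .
qed

lemma lm_hd: "xs \<noteq> [] \<Longrightarrow> lm xs \<noteq> [] \<and> hd (lm xs) = hd xs"
  by (induction xs rule: lm.induct) auto

lemma lm_append_strict_prefix:
  assumes "Q \<noteq> []" and "\<forall>i < length P. \<not> greenL ((P @ Q) ! i) ((P @ Q) ! Suc i)"
  shows "lm (P @ Q) = P @ lm Q"
  using assms
proof (induction P)
  case Nil
  then show ?case by simp
next
  case (Cons x P)
  have "lm (P @ Q) = P @ lm Q"
    using Cons.IH Cons.prems by (metis Suc_less_eq append_Cons length_Cons nth_Cons_Suc)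
  moreover obtain y ys where yys: "P @ Q = y # ys"
    using Cons.prems(1) by (cases "P @ Q") auto
  moreover have "\<not> greenL x y" using Cons.prems(2) yys by force
  ultimately show ?case by simp
qed

text \<open>Before reduction, the product list starts with m_k n; for k = 0 this is I n = n.\<close>

lemma hd_translated_chain:
  assumes "rh_chain \<sigma>" and "\<tau> \<noteq> []"
  shows "hd (map (\<lambda>m. mI m (hd \<tau>)) (butlast \<sigma>) @ \<tau>) = mI (hd \<sigma>) (hd \<tau>)"
proof (cases "butlast \<sigma> = []")
  case True
  have "\<sigma> \<noteq> []" and "last \<sigma> = None" using assms unfolding rh_chain_def by auto
  then have "\<sigma> = [None]" using True by (cases \<sigma> rule: rev_cases) auto
  then show ?thesis using assms(2) by simp
next
  case False
  then have "hd (butlast \<sigma>) = hd \<sigma>" by (cases \<sigma>) (auto split: if_splits)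
  then show ?thesis using False by (simp add: hd_map)
qed

lemma hd_rh_mult:
  assumes "rh_chain \<sigma>" and "\<tau> \<noteq> []"
  shows "rh_mult \<sigma> \<tau> \<noteq> [] \<and> hd (rh_mult \<sigma> \<tau>) = mI (hd \<sigma>) (hd \<tau>)"
  using lm_hd[of "map (\<lambda>m. mI m (hd \<tau>)) (butlast \<sigma>) @ \<tau>"] hd_translated_chain[OF assms]
    assms(2)
  unfolding rh_mult_def by simp

lemma drop_eq_nth:
  assumes "drop p xs = ys" and "ys \<noteq> []"
  shows "p < length xs" and "xs ! p = hd ys"
  using assms by (metis drop_all not_le_imp_less, metis drop_all hd_drop_conv_nth not_le_imp_less)

lemma greenR_head_witness:
  assumes "rh_chain \<sigma>" and "\<tau> \<noteq> []" and "greenR (hd \<sigma>) (hd (rh_mult \<sigma> \<tau>))"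
  obtains v where "hd \<sigma> = mI (mI (hd \<sigma>) (hd \<tau>)) v"
  using assms hd_rh_mult[OF assms(1,2)] unfolding greenR_def leR_def by auto

lemma rh_mult_extension:
  assumes chain_\<sigma>: "rh_chain \<sigma>" and tne: "\<tau> \<noteq> []"
    and R: "greenR (hd \<sigma>) (hd (rh_mult \<sigma> \<tau>))"
    and chain_\<sigma>': "rh_chain \<sigma>'" and ext: "drop p \<sigma>' = \<sigma>"
  shows "rh_mult \<sigma>' \<tau> = map (\<lambda>x. mI x (hd \<tau>)) (take p \<sigma>') @ rh_mult \<sigma> \<tau>"
proof -
  define f where "f = (\<lambda>x. mI x (hd \<tau>))"
  define P where "P = map f (take p \<sigma>')"
  define rest where "rest = map f (butlast \<sigma>) @ \<tau>"
  have sne: "\<sigma> \<noteq> []" using chain_\<sigma> unfolding rh_chain_def by simp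
  have \<sigma>'_split: "\<sigma>' = take p \<sigma>' @ \<sigma>" using ext by (metis append_take_drop_id)
  note plen = drop_eq_nth(1)[OF ext sne] and \<sigma>'_p = drop_eq_nth(2)[OF ext sne]
  obtain v where hv: "hd \<sigma> = mI (mI (hd \<sigma>) (hd \<tau>)) v"
    using greenR_head_witness[OF chain_\<sigma> tne R] .
  have below: "leL (\<sigma>' ! i) (hd \<sigma>)" if "i \<le> p" for i
    using rh_chain_leL[OF chain_\<sigma>' that plen] \<sigma>'_p by simp
  have rest_ne: "rest \<noteq> []" using tne unfolding rest_def by simp
  have hd_rest: "hd rest = f (hd \<sigma>)"
    using hd_translated_chain[OF chain_\<sigma> tne] unfolding rest_def f_def .
  have entries: "(P @ rest) ! j = f (\<sigma>' ! j)" if "j \<le> p" for j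
  proof (cases "j = p")
    case True
    then show ?thesis using rest_ne hd_rest \<sigma>'_p plen unfolding P_def
      by (simp add: nth_append hd_conv_nth)
  next
    case False
    then show ?thesis using that plen unfolding P_def by (simp add: nth_append)
  qed
  have strict: "\<not> greenL ((P @ rest) ! i) ((P @ rest) ! Suc i)" if "i < p" for i
  proof -
    have "ltL (\<sigma>' ! i) (\<sigma>' ! Suc i)"
      using chain_\<sigma>' plen that unfolding rh_chain_def by simp
    then show ?thesis
      using right_translation_not_greenL[OF hv _ below] entries that unfolding f_def by simp
  qed
  have "butlast \<sigma>' = take p \<sigma>' @ butlast \<sigma>" using \<sigma>'_split sne by (metis butlast_append)
  then have "rh_mult \<sigma>' \<tau> = lm (P @ rest)" unfolding rh_mult_def P_def rest_def f_def by simp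
  also have "\<dots> = P @ lm rest"
    using lm_append_strict_prefix[OF rest_ne] strict plen unfolding P_def by simp
  finally show ?thesis unfolding rh_mult_def rest_def P_def f_def by simp
qed

lemma length_zeiger [simp]: "xs \<noteq> [] \<Longrightarrow> length (zeiger s xs) = length xs"
  unfolding zeiger_def by simp

lemma nth_zeiger:
  "Suc i < length xs \<Longrightarrow> zeiger s xs ! i = mI (xs ! i) (s (xs ! Suc i))"
  unfolding zeiger_def by (simp add: nth_append nth_tl less_diff_conv)

text \<open>The encoding of a list ending in Q ends in the encoding of Q: each letter only looks at
  a term and its successor.\<close>

lemma zeiger_append:
  assumes "Q \<noteq> []"
  shows "zeiger s (P @ Q) = take (length P) (zeiger s (P @ Q)) @ zeiger s Q"
proof -
  have "drop (length P) (zip (P @ Q) (tl (P @ Q))) = zip Q (tl Q)"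
    by (simp add: drop_zip drop_tl)
  moreover have "length P \<le> length (zip (P @ Q) (tl (P @ Q)))"
    using assms by (cases Q) simp_all
  ultimately have "drop (length P) (zeiger s (P @ Q)) = zeiger s Q"
    unfolding zeiger_def by (simp add: drop_map)
  then show ?thesis by (metis append_take_drop_id)
qed

lemma take_zeiger_eqI:
  assumes "p < length xs" and "p < length ys"
    and "\<And>i. i < p \<Longrightarrow> mI (xs ! i) (s (xs ! Suc i)) = mI (ys ! i) (s (ys ! Suc i))"
  shows "take p (zeiger s xs) = take p (zeiger s ys)"
proof (rule nth_equalityI)
  have "xs \<noteq> []" and "ys \<noteq> []" using assms(1,2) by auto
  then show "length (take p (zeiger s xs)) = length (take p (zeiger s ys))"
    using assms(1,2) by simp
next
  fix i assume "i < length (take p (zeiger s xs))"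
  then have "i < p" by simp
  then show "take p (zeiger s xs) ! i = take p (zeiger s ys) ! i"
    using assms by (simp add: nth_zeiger)
qed

lemma zeiger_extension_prefix:
  assumes starR: "\<And>x y. greenR x y \<Longrightarrow> mI x (star x) = mI y (star y)"
    and chain_\<sigma>: "rh_chain \<sigma>" and tne: "\<tau> \<noteq> []"
    and R: "greenR (hd \<sigma>) (hd (rh_mult \<sigma> \<tau>))"
    and chain_\<sigma>': "rh_chain \<sigma>'" and ext: "drop p \<sigma>' = \<sigma>"
  shows "take p (zeiger star (rh_mult \<sigma>' \<tau>)) = take p (zeiger star \<sigma>')"
proof -
  define f where "f = (\<lambda>x. mI x (hd \<tau>))"
  have sne: "\<sigma> \<noteq> []" using chain_\<sigma> unfolding rh_chain_def by simp
  note plen = drop_eq_nth(1)[OF ext sne] and \<sigma>'_p = drop_eq_nth(2)[OF ext sne]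
  obtain Q where prod: "rh_mult \<sigma>' \<tau> = map f (take p \<sigma>') @ Q"
    and Qne: "Q \<noteq> []" and hdQ: "hd Q = f (hd \<sigma>)"
    using rh_mult_extension[OF chain_\<sigma> tne R chain_\<sigma>' ext] hd_rh_mult[OF chain_\<sigma> tne]
    unfolding f_def by blast
  obtain v where hv: "hd \<sigma> = mI (mI (hd \<sigma>) (hd \<tau>)) v"
    using greenR_head_witness[OF chain_\<sigma> tne R] .
  have entries: "rh_mult \<sigma>' \<tau> ! j = f (\<sigma>' ! j)" if "j \<le> p" for j
    using that plen Qne hdQ \<sigma>'_p unfolding prod
    by (cases "j = p") (auto simp: nth_append hd_conv_nth)
  show ?thesis
  proof (rule take_zeiger_eqI)
    show "p < length (rh_mult \<sigma>' \<tau>)" using prod Qne plen by simp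
    show "p < length \<sigma>'" by (fact plen)
  next
    fix i assume "i < p"
    then have "leL (\<sigma>' ! i) (\<sigma>' ! Suc i)" and "leL (\<sigma>' ! Suc i) (hd \<sigma>)"
      using rh_chain_leL[OF chain_\<sigma>', of i "Suc i"] rh_chain_leL[OF chain_\<sigma>', of "Suc i" p]
        plen \<sigma>'_p by simp_all
    then show "mI (rh_mult \<sigma>' \<tau> ! i) (star (rh_mult \<sigma>' \<tau> ! Suc i))
             = mI (\<sigma>' ! i) (star (\<sigma>' ! Suc i))"
      using right_translation_letter[OF starR hv] entries \<open>i < p\<close> unfolding f_def by simp
  qed
qed

theorem theorem7p5:
  fixes G :: "'a::semigroup_mult option set \<Rightarrow> 'g monoid"
    and A B :: "'a option set \<Rightarrow> 'i set"
    and C :: "'a option set \<Rightarrow> 'i \<Rightarrow> 'i \<Rightarrow> 'g option"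
    and a1 b1 :: "'a option set \<Rightarrow> 'i"
    and \<phi> :: "'a option set \<Rightarrow> 'a option \<Rightarrow> 'i \<times> 'g \<times> 'i"
    and star sharp :: "'a option \<Rightarrow> 'a option"
    and \<sigma> \<tau> \<sigma>' :: "'a option list"
    and p :: nat
  assumes stab: "stable TYPE('a)"
    and coord: "\<And>m. rees_coord (Jclass m) (G (Jclass m)) (A (Jclass m)) (B (Jclass m))
                       (C (Jclass m)) (a1 (Jclass m)) (b1 (Jclass m)) (\<phi> (Jclass m))"
    and star: "\<And>m. mI m (star m) =
                 rees_elem (Jclass m) (G (Jclass m)) (b1 (Jclass m)) (\<phi> (Jclass m))
                   (fst (\<phi> (Jclass m) m))"
    and sharp: "\<And>m. mI (rees_elem (Jclass m) (G (Jclass m)) (b1 (Jclass m)) (\<phi> (Jclass m))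
                   (fst (\<phi> (Jclass m) m))) (sharp m) = m"
    and starI: "star None = None" and sharpI: "sharp None = None"
    and chain_\<sigma>: "rh_chain \<sigma>" and chain_\<tau>: "rh_chain \<tau>"
    and R: "greenR (hd \<sigma>) (hd (rh_mult \<sigma> \<tau>))"
    and chain_\<sigma>': "rh_chain \<sigma>'" and len: "length \<sigma>' = length \<sigma> + p"
    and ext: "drop p \<sigma>' = \<sigma>"
  shows "zeiger star (rh_mult \<sigma>' \<tau>) = take p (zeiger star \<sigma>') @ zeiger star (rh_mult \<sigma> \<tau>)"
proof -
  have tne: "\<tau> \<noteq> []" using chain_\<tau> unfolding rh_chain_def by simp
  have starR: "\<And>x y. greenR x y \<Longrightarrow> mI x (star x) = mI y (star y)"
    using star_greenR_invariant[OF coord star] .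
  define P where "P = map (\<lambda>x. mI x (hd \<tau>)) (take p \<sigma>')"
  have prod: "rh_mult \<sigma>' \<tau> = P @ rh_mult \<sigma> \<tau>"
    unfolding P_def using rh_mult_extension[OF chain_\<sigma> tne R chain_\<sigma>' ext] .
  have "length P = p" unfolding P_def using len by simp
  then have "zeiger star (rh_mult \<sigma>' \<tau>)
      = take p (zeiger star (rh_mult \<sigma>' \<tau>)) @ zeiger star (rh_mult \<sigma> \<tau>)"
    using zeiger_append[of "rh_mult \<sigma> \<tau>" star P] hd_rh_mult[OF chain_\<sigma> tne] prod by simp
  also have "take p (zeiger star (rh_mult \<sigma>' \<tau>)) = take p (zeiger star \<sigma>')"
    by (rule zeiger_extension_prefix[OF starR chain_\<sigma> tne R chain_\<sigma>' ext])
  finally show ?thesis .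
qed

end
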